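(* Let $X$ be a topological space with topology $\tau$ and let $\hat X$ denote the set $X$ with the semi-regularization topology $\hat\tau$. If $X$ is strongly $\Theta$-discrete homogeneous, then $\hat X$ is also strongly $\Theta$-discrete homogeneous.
   Context: An open set $O$ is regular open if it equals the interior of its closure. The semi-regularization $\hat\tau$ of $\tau$ is the topology on $X$ generated by the base of all regular open subsets of $(X,\tau)$; $\hat X$ is Hausdorff iff $X$ is. A subset $D$ of a space $Y$ is $\Theta$-discrete if each point $y\in Y$ has a neighbourhood whose closure contains at most one point of $D$. A Hausdorff space $Y$ is strongly $\Theta$-discrete homogeneous (s$\Theta$-DH) if for any two $\Theta$-discrete subsets $A,B$ of $Y$ and any bijection $f\colon A\to B$, $f$ extends to a homeomorphism of $Y$ onto itself. *)

theory Defs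
  imports "HOL-Analysis.Analysis"
begin

definition regular_openin :: "'a topology \<Rightarrow> 'a set \<Rightarrow> bool" where
  "regular_openin X U \<longleftrightarrow> openin X U \<and> X interior_of (X closure_of U) = U"

text \<open>Semi-regularization: topology on the same carrier generated by the regular open sets
  (they form a base, so the generated topology is that of unions of regular open sets).\<close>
definition semiregularization :: "'a topology \<Rightarrow> 'a topology" where
  "semiregularization X = topology_generated_by {U. regular_openin X U}"

definition theta_discrete :: "'a topology \<Rightarrow> 'a set \<Rightarrow> bool" where
  "theta_discrete Y D \<longleftrightarrow> D \<subseteq> topspace Y \<and>
     (\<forall>y\<in>topspace Y. \<exists>U. openin Y U \<and> y \<in> U \<and>
        (\<forall>a b. a \<in> D \<and> a \<in> Y closure_of U \<and> b \<in> D \<and> b \<in> Y closure_of U \<longrightarrow> a = b))"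

definition strongly_theta_DH :: "'a topology \<Rightarrow> bool" where
  "strongly_theta_DH Y \<longleftrightarrow> Hausdorff_space Y \<and>
     (\<forall>A B f. theta_discrete Y A \<and> theta_discrete Y B \<and> bij_betw f A B \<longrightarrow>
        (\<exists>h. homeomorphic_map Y Y h \<and> (\<forall>x\<in>A. h x = f x)))"

end

theory Submission
  imports Defs
begin

text \<open>The semi-regularization is a coarser topology on the same carrier, so its closures are
  larger and every \<open>\<Theta>\<close>-discrete set of \<open>\<hat>X\<close> is \<open>\<Theta>\<close>-discrete in \<open>X\<close>. A homeomorphism of \<open>X\<close>
  preserves interiors and closures, hence regular open sets, hence is a homeomorphism of \<open>\<hat>X\<close>.
  So a bijection between \<open>\<Theta>\<close>-discrete subsets of \<open>\<hat>X\<close> extends to a homeomorphism of \<open>X\<close>, which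
  is one of \<open>\<hat>X\<close>. Hausdorffness passes to \<open>\<hat>X\<close> because disjoint open sets \<open>U\<close>, \<open>V\<close> have
  disjoint regular open hulls \<open>int (cl U)\<close>, \<open>int (cl V)\<close>.\<close>

lemma regular_openin_imp_openin: "regular_openin X U \<Longrightarrow> openin X U"
  by (simp add: regular_openin_def)

lemma regular_openin_interior_of_closure_of:
  "regular_openin X (X interior_of (X closure_of S))"
proof -
  let ?R = "X interior_of (X closure_of S)"
  have "X closure_of ?R \<subseteq> X closure_of S"
    by (metis closure_of_closure_of closure_of_mono interior_of_subset)
  then have "X interior_of (X closure_of ?R) \<subseteq> ?R"
    by (rule interior_of_mono)
  moreover have "?R \<subseteq> X interior_of (X closure_of ?R)"
    by (meson closure_of_subset interior_of_maximal openin_interior_of openin_subset)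
  ultimately show ?thesis
    unfolding regular_openin_def by auto
qed

lemma regular_openin_topspace: "regular_openin X (topspace X)"
  by (simp add: regular_openin_def)

lemma interior_of_closure_of_disjoint:
  assumes "openin X U" "openin X V" "disjnt U V"
  shows "disjnt (X interior_of (X closure_of U)) (X interior_of (X closure_of V))"
proof -
  have "disjnt U (X closure_of V)"
    using assms openin_Int_closure_of_eq_empty by (metis disjnt_def)
  then have "disjnt (X closure_of U) (X interior_of (X closure_of V))"
    by (metis disjnt_def inf_commute openin_Int_closure_of_eq_empty openin_interior_of
        disjnt_subset2 interior_of_subset)
  then show ?thesis
    by (meson disjnt_subset1 interior_of_subset)
qed

lemma regular_openin_homeomorphic_image:
  assumes hom: "homeomorphic_map X Y f" and U: "regular_openin X U"
  shows "regular_openin Y (f ` U)"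
proof -
  have "U \<subseteq> topspace X"
    using U openin_subset regular_openin_imp_openin by blast
  then show ?thesis
    using U homeomorphic_map_openness[OF hom] homeomorphic_map_closure_of[OF hom]
      homeomorphic_map_interior_of[OF hom closure_of_subset_topspace]
    unfolding regular_openin_def by simp
qed

lemma closure_of_subset_coarser:
  assumes "topspace X = topspace Y" "\<And>U. openin Y U \<Longrightarrow> openin X U"
  shows "X closure_of S \<subseteq> Y closure_of S"
  using assms by (auto simp: in_closure_of)

lemma theta_discrete_coarser:
  assumes same: "topspace X = topspace Y" and coarser: "\<And>U. openin Y U \<Longrightarrow> openin X U"
    and D: "theta_discrete Y D"
  shows "theta_discrete X D"
  unfolding theta_discrete_def
proof (intro conjI ballI)
  show "D \<subseteq> topspace X"
    using D same by (simp add: theta_discrete_def)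
  fix y assume "y \<in> topspace X"
  then obtain U where "openin Y U" "y \<in> U" and U:
    "\<And>a b. \<lbrakk>a \<in> D; a \<in> Y closure_of U; b \<in> D; b \<in> Y closure_of U\<rbrakk> \<Longrightarrow> a = b"
    using D same unfolding theta_discrete_def by metis
  show "\<exists>U. openin X U \<and> y \<in> U \<and>
      (\<forall>a b. a \<in> D \<and> a \<in> X closure_of U \<and> b \<in> D \<and> b \<in> X closure_of U \<longrightarrow> a = b)"
  proof (intro exI conjI allI impI)
    show "openin X U" "y \<in> U"
      using coarser \<open>openin Y U\<close> \<open>y \<in> U\<close> by auto
    fix a b assume "a \<in> D \<and> a \<in> X closure_of U \<and> b \<in> D \<and> b \<in> X closure_of U"
    then show "a = b"
      using U closure_of_subset_coarser[OF same coarser] by blast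
  qed
qed

lemma topspace_semiregularization [simp]:
  "topspace (semiregularization X) = topspace X"
proof -
  have "\<Union>{U. regular_openin X U} = topspace X"
    using regular_openin_topspace openin_subset regular_openin_imp_openin by blast
  then show ?thesis
    by (simp add: semiregularization_def)
qed

lemma openin_semiregularization_regular:
  "regular_openin X U \<Longrightarrow> openin (semiregularization X) U"
  by (simp add: semiregularization_def topology_generated_by_Basis)

lemma openin_semiregularization_imp_openin:
  assumes "openin (semiregularization X) U"
  shows "openin X U"
proof -
  have gen: "generate_topology_on {U. regular_openin X U} U"
    using assms by (simp add: semiregularization_def openin_topology_generated_by_iff)
  show ?thesis
    by (rule generate_topology_on_coarsest[OF istopology_openin _ gen])
      (simp add: regular_openin_imp_openin)
qed

lemma theta_discrete_semiregularization_imp: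
  "theta_discrete (semiregularization X) D \<Longrightarrow> theta_discrete X D"
  by (rule theta_discrete_coarser) (simp_all add: openin_semiregularization_imp_openin)

lemma Hausdorff_space_semiregularization:
  assumes "Hausdorff_space X"
  shows "Hausdorff_space (semiregularization X)"
  unfolding Hausdorff_space_def topspace_semiregularization
proof (intro allI impI)
  fix x y assume "x \<in> topspace X \<and> y \<in> topspace X \<and> x \<noteq> y"
  then obtain U V where UV: "openin X U" "openin X V" "x \<in> U" "y \<in> V" "disjnt U V"
    using assms unfolding Hausdorff_space_def by metis
  let ?U = "X interior_of (X closure_of U)" and ?V = "X interior_of (X closure_of V)"
  have "U \<subseteq> ?U" "V \<subseteq> ?V"
    using UV by (meson closure_of_subset interior_of_maximal openin_subset)+
  moreover have "openin (semiregularization X) ?U" "openin (semiregularization X) ?V"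
    by (simp_all add: openin_semiregularization_regular regular_openin_interior_of_closure_of)
  ultimately show "\<exists>U V. openin (semiregularization X) U \<and> openin (semiregularization X) V \<and>
      x \<in> U \<and> y \<in> V \<and> disjnt U V"
    using UV interior_of_closure_of_disjoint[OF UV(1,2,5)] by blast
qed

lemma continuous_map_semiregularization:
  assumes "homeomorphic_maps X Y f g"
  shows "continuous_map (semiregularization X) (semiregularization Y) f"
  unfolding semiregularization_def[of Y]
proof (rule continuous_on_generated_topo)
  have g: "homeomorphic_map Y X g"
    using assms by (simp add: homeomorphic_maps_map)
  fix U assume "U \<in> {U. regular_openin Y U}"
  then have U: "regular_openin Y U" by simp
  have "f -` U \<inter> topspace X = g ` U"
  proof
    show "f -` U \<inter> topspace X \<subseteq> g ` U"
      using assms by (force simp: homeomorphic_maps_def)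
    have "U \<subseteq> topspace Y"
      using U openin_subset regular_openin_imp_openin by blast
    then show "g ` U \<subseteq> f -` U \<inter> topspace X"
      using assms by (auto simp: homeomorphic_maps_def continuous_map_def)
  qed
  then show "openin (semiregularization X) (f -` U \<inter> topspace (semiregularization X))"
    by (simp add: openin_semiregularization_regular regular_openin_homeomorphic_image[OF g U])
next
  have "f ` topspace X \<subseteq> topspace Y"
    using assms by (simp add: homeomorphic_maps_def continuous_map_image_subset_topspace)
  then show "f ` topspace (semiregularization X) \<subseteq> \<Union>{U. regular_openin Y U}"
    using regular_openin_topspace by auto
qed

lemma homeomorphic_map_semiregularization:
  assumes "homeomorphic_map X Y f"
  shows "homeomorphic_map (semiregularization X) (semiregularization Y) f"
proof -
  obtain g where g: "homeomorphic_maps X Y f g"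
    using assms homeomorphic_map_maps by blast
  then have "homeomorphic_maps (semiregularization X) (semiregularization Y) f g"
    using continuous_map_semiregularization[OF g]
      continuous_map_semiregularization[OF homeomorphic_maps_sym[THEN iffD1, OF g]]
    by (simp add: homeomorphic_maps_def)
  then show ?thesis
    using homeomorphic_map_maps by blast
qed

theorem mainTheorem15:
  fixes X :: "'a topology"
  assumes "strongly_theta_DH X"
  shows "strongly_theta_DH (semiregularization X)"
  unfolding strongly_theta_DH_def
proof (intro conjI allI impI)
  show "Hausdorff_space (semiregularization X)"
    using assms Hausdorff_space_semiregularization unfolding strongly_theta_DH_def by blast
  fix A B f
  assume "theta_discrete (semiregularization X) A \<and> theta_discrete (semiregularization X) B
    \<and> bij_betw f A B"
  then have "theta_discrete X A" "theta_discrete X B" "bij_betw f A B"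
    using theta_discrete_semiregularization_imp by blast+
  then obtain h where "homeomorphic_map X X h" "\<forall>x\<in>A. h x = f x"
    using assms unfolding strongly_theta_DH_def by blast
  then show "\<exists>h. homeomorphic_map (semiregularization X) (semiregularization X) h
      \<and> (\<forall>x\<in>A. h x = f x)"
    using homeomorphic_map_semiregularization by blast
qed

end
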